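(* Let $m\ge 1$ and $A=(a_0,\ldots,a_m)$ real with $a_0,a_m\neq0$. If $w$ is a nonzero complex number with $P_A(w)=P_A(w^{-1})=0$, then $T_{n,A}\!\left(\tfrac12(w+w^{-1})\right)=0$ for all $n\ge m$.
   Context: $T_k$ denotes the Chebyshev polynomial of the first kind, $T_k(\cos\theta)=\cos k\theta$. For $A=(a_0,\ldots,a_m)$ real with $a_0,a_m\ne0$ and $n\ge m$, $T_{n,A}(x)=\sum_{i=0}^m a_iT_{n-i}(x)$ and $P_A(x)=\sum_{i=0}^m a_ix^{m-i}$. *)

theory Defs
  imports "HOL-Analysis.Analysis"
begin

fun cheb_T :: "nat \<Rightarrow> 'a::comm_ring_1 \<Rightarrow> 'a" where
  "cheb_T 0 x = 1"
| "cheb_T (Suc 0) x = x"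
| "cheb_T (Suc (Suc k)) x = 2 * x * cheb_T (Suc k) x - cheb_T k x"

text \<open>A = (a_0,...,a_m) is represented by a function a with indices 0..m.
  T_{n,A}(x) = sum_{i=0}^m a_i T_{n-i}(x), with real coefficients embedded.\<close>
definition T_nA :: "nat \<Rightarrow> nat \<Rightarrow> (nat \<Rightarrow> real) \<Rightarrow> complex \<Rightarrow> complex" where
  "T_nA n m a x = (\<Sum>i=0..m. of_real (a i) * cheb_T (n - i) x)"

definition P_A :: "nat \<Rightarrow> (nat \<Rightarrow> real) \<Rightarrow> complex \<Rightarrow> complex" where
  "P_A m a x = (\<Sum>i=0..m. of_real (a i) * x ^ (m - i))"

end

theory Submission
  imports Defs
begin

text \<open>Since T_k((w + 1/w)/2) = (w^k + w^-k)/2, shifting exponents by n - m rewrites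
  T_{n,A}((w + 1/w)/2) as (w^(n-m) P_A(w) + w^-(n-m) P_A(1/w))/2, which vanishes when both
  w and 1/w are roots of P_A.\<close>

lemma cheb_T_half_add_inverse:
  fixes w :: "'a::field_char_0"
  assumes "w \<noteq> 0"
  shows "cheb_T k ((w + inverse w) / 2) = (w ^ k + inverse w ^ k) / 2"
proof (induction k "(w + inverse w) / 2" rule: cheb_T.induct)
  case (3 k)
  have "w * inverse w ^ Suc k = inverse w ^ k" "inverse w * w ^ Suc k = w ^ k"
    using assms by (simp_all add: mult.assoc[symmetric])
  then have "(w + inverse w) * (w ^ Suc k + inverse w ^ Suc k)
      = w ^ Suc (Suc k) + inverse w ^ Suc (Suc k) + inverse w ^ k + w ^ k"
    by (simp only: distrib_left distrib_right power_Suc[symmetric]) (simp add: ac_simps)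
  moreover have "cheb_T (Suc (Suc k)) ((w + inverse w) / 2)
      = ((w + inverse w) * (w ^ Suc k + inverse w ^ Suc k) - (w ^ k + inverse w ^ k)) / 2"
    unfolding cheb_T.simps 3 by (simp add: diff_divide_distrib)
  ultimately show ?case by simp
qed simp_all

lemma T_nA_half_add_inverse:
  fixes w :: complex
  assumes "w \<noteq> 0" and "m \<le> n"
  shows "T_nA n m a ((w + inverse w) / 2)
    = (w ^ (n - m) * P_A m a w + inverse w ^ (n - m) * P_A m a (inverse w)) / 2"
proof -
  have termwise: "of_real (a i) * cheb_T (n - i) ((w + inverse w) / 2)
      = (w ^ (n - m) * (of_real (a i) * w ^ (m - i))
         + inverse w ^ (n - m) * (of_real (a i) * inverse w ^ (m - i))) / 2"
    if "i \<in> {0..m}" for i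
  proof -
    from that assms(2) have "n - i = (n - m) + (m - i)" by simp
    then show ?thesis
      unfolding cheb_T_half_add_inverse[OF assms(1)] by (simp add: power_add algebra_simps)
  qed
  have "T_nA n m a ((w + inverse w) / 2)
      = (\<Sum>i=0..m. (w ^ (n - m) * (of_real (a i) * w ^ (m - i))
         + inverse w ^ (n - m) * (of_real (a i) * inverse w ^ (m - i))) / 2)"
    unfolding T_nA_def using termwise by (rule sum.cong[OF refl])
  also have "\<dots> = (w ^ (n - m) * P_A m a w + inverse w ^ (n - m) * P_A m a (inverse w)) / 2"
    unfolding P_A_def sum_divide_distrib[symmetric] sum.distrib sum_distrib_left ..
  finally show ?thesis .
qed

theorem corollary2p2:
  fixes m :: nat and a :: "nat \<Rightarrow> real" and w :: complex
  assumes "m \<ge> 1" and "a 0 \<noteq> 0" and "a m \<noteq> 0"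
    and "w \<noteq> 0" and "P_A m a w = 0" and "P_A m a (inverse w) = 0"
  shows "\<forall>n\<ge>m. T_nA n m a ((w + inverse w) / 2) = 0"
proof (intro allI impI)
  fix n assume "m \<le> n"
  show "T_nA n m a ((w + inverse w) / 2) = 0"
    unfolding T_nA_half_add_inverse[OF \<open>w \<noteq> 0\<close> \<open>m \<le> n\<close>]
    using \<open>P_A m a w = 0\<close> \<open>P_A m a (inverse w) = 0\<close> by simp
qed

end
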